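(* Let $D\subset\mathbb N$ and let $g_1,g_2:D\to\mathbb R$ satisfy $g_2(n)\ge g_1(n)$ for all $n\in D$, $\lim_{n\to\infty}g_1(n)=\infty$ and $\lim_{n\to\infty}g_2(n)/n=0$. Let $f:D\to\mathbb R$ be such that there is $n_0\in D$ with $f(n)\ge g_1(n)$ for all $n\in D$, $n\ge n_0$, and suppose $f(n)\le g_2(n)$ for infinitely many $n\in D$. Then $\Omega(f)\ne\emptyset$, the slope set $A_f=\{a_1,\dots,a_k\}$ is finite, and $$a_1<a_2<\cdots<a_k=0.$$
   Context: Let $D=\{x_0<x_1<x_2<\cdots\}\subset\mathbb R$ be a strictly increasing sequence (finite or infinite) and $f:D\to\mathbb R$. A function $h:D\to\mathbb R$ is convex on $D$ if $h(x)\le \frac{(b-x)h(a)+(x-a)h(b)}{b-a}$ for all $a<x<b$ in $D$. Let $\Omega(f)$ be the set of convex $h:D\to\mathbb R$ with $h\le f$ on $D$. If $\Omega(f)\ne\emptyset$, the lower convex envelope of $f$ is $\breve f(x):=\sup\{h(x):h\in\Omega(f)\}$, a piecewise linear convex function on $D$. Its vertex set $H_f=\{m_0=x_0<m_1<m_2<\cdots\}\subset D$ consists of $x_0$ together with the points of $D$ at which $\breve f=f$ and $\breve f$ changes slope, so that $\breve f$ is linear on $D\cap[m_{i-1},m_i]$ for each $i$. The slope set $A_f=\{a_1<a_2<\cdots\}$ consists of the slopes $a_i=\frac{f(m_i)-f(m_{i-1})}{m_i-m_{i-1}}$ of $\breve f$ on $[m_{i-1},m_i]$; if $D$ is infinite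 and $H_f=\{m_0,\dots,m_k\}$ is finite, then $\breve f$ is linear on $D\cap[m_k,\infty)$ and $A_f=\{a_1,\dots,a_k,a_{k+1}\}$, where $a_{k+1}$ is the slope of $\breve f$ on $D\cap[m_k,\infty)$. *)

theory Defs
  imports Complex_Main
begin

text \<open>Discrete domain D :: nat set (strictly increasing sequence x_0 < x_1 < ...);
functions on D are represented as nat => real, values outside D are irrelevant.\<close>

definition convex_onD :: "nat set \<Rightarrow> (nat \<Rightarrow> real) \<Rightarrow> bool" where
  "convex_onD D h \<longleftrightarrow>
     (\<forall>a\<in>D. \<forall>x\<in>D. \<forall>b\<in>D. a < x \<and> x < b \<longrightarrow>
        h x \<le> ((real b - real x) * h a + (real x - real a) * h b) / (real b - real a))"

definition Omega :: "nat set \<Rightarrow> (nat \<Rightarrow> real) \<Rightarrow> (nat \<Rightarrow> real) set" where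
  "Omega D f = {h. convex_onD D h \<and> (\<forall>x\<in>D. h x \<le> f x)}"

text \<open>Lower convex envelope (meaningful when Omega D f is nonempty).\<close>
definition lce :: "nat set \<Rightarrow> (nat \<Rightarrow> real) \<Rightarrow> nat \<Rightarrow> real" where
  "lce D f x = (SUP h\<in>Omega D f. h x)"

definition succD :: "nat set \<Rightarrow> nat \<Rightarrow> nat" where
  "succD D x = (LEAST y. y \<in> D \<and> x < y)"

definition predD :: "nat set \<Rightarrow> nat \<Rightarrow> nat" where
  "predD D x = Max {y\<in>D. y < x}"

definition changes_slope :: "nat set \<Rightarrow> (nat \<Rightarrow> real) \<Rightarrow> nat \<Rightarrow> bool" where
  "changes_slope D g x \<longleftrightarrow>
     (\<exists>y\<in>D. y < x) \<and> (\<exists>y\<in>D. x < y) \<and>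
     (g x - g (predD D x)) / (real x - real (predD D x))
       \<noteq> (g (succD D x) - g x) / (real (succD D x) - real x)"

definition vertices :: "nat set \<Rightarrow> (nat \<Rightarrow> real) \<Rightarrow> nat set" where
  "vertices D f = {x\<in>D. x = (LEAST y. y \<in> D)}
      \<union> {x\<in>D. lce D f x = f x \<and> changes_slope D (lce D f) x}"

text \<open>Slope set A_f: slopes of the envelope between consecutive vertices, plus, when D is
infinite and H_f is finite, the slope of the envelope on D \<inter> [m_k, \<infinity>).\<close>
definition slopes :: "nat set \<Rightarrow> (nat \<Rightarrow> real) \<Rightarrow> real set" where
  "slopes D f =
     {(lce D f m' - lce D f m) / (real m' - real m) | m m'.
        m \<in> vertices D f \<and> m' \<in> vertices D f \<and> m < m' \<and>
        \<not> (\<exists>y\<in>vertices D f. m < y \<and> y < m')}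
   \<union> {(lce D f (succD D m) - lce D f m) / (real (succD D m) - real m) | m.
        infinite D \<and> finite (vertices D f) \<and> m = Max (vertices D f)}"

end

theory Submission
  imports Defs "HOL-Real_Asymp.Real_Asymp" "HOL-Library.Infinite_Set"
begin

text \<open>
  A constant equal to the minimum of \<open>f\<close> (which exists because \<open>f \<ge> g\<^sub>1 \<rightarrow> \<infinity>\<close>) is a
  convex minorant, so \<open>\<Omega>(f) \<noteq> \<emptyset>\<close>. The envelope is nonincreasing: an increasing chord
  of a convex minorant would force linear growth of \<open>f\<close> along the points where
  \<open>f \<le> g\<^sub>2 = o(n)\<close>. Hence the envelope is constant beyond a minimum point of \<open>f\<close>, there
  are only finitely many vertices, and all slopes are \<open>\<le> 0\<close>. Beyond the last vertex the
  envelope is affine (at non-contact points it could otherwise be raised), so its final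
  slope is that of the constant tail, namely \<open>0\<close>.
\<close>

lemma chord_mono:
  fixes a x b u u' v v' :: real
  assumes "a < x" "x < b" "u \<le> u'" "v \<le> v'"
  shows "((b-x)*u + (x-a)*v)/(b-a) \<le> ((b-x)*u' + (x-a)*v')/(b-a)"
proof -
  have "(b-x)*u + (x-a)*v \<le> (b-x)*u' + (x-a)*v'"
    using assms by (intro add_mono mult_left_mono) auto
  then show ?thesis using assms by (intro divide_right_mono) auto
qed

lemma chord_le_chord_of_wider:
  fixes a p x q b A B P Q :: real
  assumes "a \<le> p" "p < x" "x < q" "q \<le> b"
    and "P \<le> ((b-p)*A + (p-a)*B)/(b-a)" "Q \<le> ((b-q)*A + (q-a)*B)/(b-a)"
  shows "((q-x)*P + (x-p)*Q)/(q-p) \<le> ((b-x)*A + (x-a)*B)/(b-a)"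
proof -
  have "((q-x)*P + (x-p)*Q)/(q-p)
      \<le> ((q-x)*(((b-p)*A + (p-a)*B)/(b-a)) + (x-p)*(((b-q)*A + (q-a)*B)/(b-a)))/(q-p)"
    using assms by (intro chord_mono) auto
  also have "\<dots> = ((b-x)*A + (x-a)*B)/(b-a)"
    using assms by (simp add: divide_simps) (simp add: algebra_simps)
  finally show ?thesis .
qed

lemma convex_onD_le_chord:
  assumes "convex_onD D h" "a \<in> D" "x \<in> D" "b \<in> D" "a \<le> x" "x \<le> b" "a < b"
  shows "h x \<le> ((real b - real x) * h a + (real x - real a) * h b) / (real b - real a)"
proof (cases "x = a \<or> x = b")
  case False
  then show ?thesis using assms unfolding convex_onD_def by auto
qed (use assms in auto)

lemma convex_onD_raise_point:
  assumes cv: "convex_onD D L" and D: "x \<in> D" "p \<in> D" "q \<in> D" and px: "p < x" "x < q"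
    and pmax: "\<forall>y\<in>D. y < x \<longrightarrow> y \<le> p" and qmin: "\<forall>y\<in>D. x < y \<longrightarrow> q \<le> y"
    and e: "0 \<le> e"
    and below: "L x + e \<le> ((real q - real x) * L p + (real x - real p) * L q) / (real q - real p)"
  shows "convex_onD D (L(x := L x + e))"
  unfolding convex_onD_def
proof (intro ballI impI)
  define h where "h = L(x := L x + e)"
  have Lh: "L z \<le> h z" for z using e unfolding h_def by simp
  fix a y b assume abD: "a \<in> D" "y \<in> D" "b \<in> D" and ab: "a < y \<and> y < b"
  show "h y \<le> ((real b - real y) * h a + (real y - real a) * h b) / (real b - real a)"
  proof (cases "y = x")
    case True
    then have "a \<le> p" "q \<le> b" "h a = L a" "h b = L b"
      using pmax qmin abD ab unfolding h_def by auto
    have "h y \<le> ((real q - real x) * L p + (real x - real p) * L q) / (real q - real p)"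
      using True below unfolding h_def by simp
    also have "\<dots> \<le> ((real b - real x) * L a + (real x - real a) * L b) / (real b - real a)"
      by (rule chord_le_chord_of_wider)
        (use convex_onD_le_chord[OF cv] abD D px ab \<open>a \<le> p\<close> \<open>q \<le> b\<close> in auto)
    finally show ?thesis using True \<open>h a = L a\<close> \<open>h b = L b\<close> by simp
  next
    case False
    then have "h y = L y" unfolding h_def by simp
    also have "\<dots> \<le> ((real b - real y) * L a + (real y - real a) * L b) / (real b - real a)"
      using cv abD ab unfolding convex_onD_def by blast
    also have "\<dots> \<le> ((real b - real y) * h a + (real y - real a) * h b) / (real b - real a)"
      using ab Lh by (intro chord_mono) auto
    finally show ?thesis .
  qed
qed

lemma Omega_le_lce:
  assumes "h \<in> Omega D f" "x \<in> D"
  shows "h x \<le> lce D f x"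
  unfolding lce_def
proof (rule cSUP_upper[OF assms(1)])
  show "bdd_above ((\<lambda>h. h x) ` Omega D f)"
    using assms(2) by (intro bdd_aboveI2[where M="f x"]) (auto simp: Omega_def)
qed

lemma lce_le:
  assumes "Omega D f \<noteq> {}" "x \<in> D"
  shows "lce D f x \<le> f x"
  unfolding lce_def using assms by (intro cSUP_least) (auto simp: Omega_def)

lemma convex_onD_lce:
  assumes "Omega D f \<noteq> {}"
  shows "convex_onD D (lce D f)"
  unfolding convex_onD_def
proof (intro ballI impI)
  fix a x b assume D: "a \<in> D" "x \<in> D" "b \<in> D" and o: "a < x \<and> x < b"
  show "lce D f x \<le> ((real b - real x) * lce D f a + (real x - real a) * lce D f b) / (real b - real a)"
    unfolding lce_def[of D f x]
  proof (rule cSUP_least[OF assms])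
    fix h assume h: "h \<in> Omega D f"
    then have "h x \<le> ((real b - real x) * h a + (real x - real a) * h b) / (real b - real a)"
      using D o by (auto simp: Omega_def convex_onD_def)
    also have "\<dots> \<le> ((real b - real x) * lce D f a + (real x - real a) * lce D f b) / (real b - real a)"
      using o by (intro chord_mono Omega_le_lce[OF h] D) auto
    finally show "h x \<le> \<dots>" .
  qed
qed

text \<open>Away from the contact set the envelope is affine between neighbouring points of \<open>D\<close>:
  otherwise it could be raised at \<open>x\<close> without leaving \<open>\<Omega>(f)\<close>.\<close>
lemma lce_slopes_eq_off_contact:
  assumes Om: "Omega D f \<noteq> {}" and D: "x \<in> D" "p \<in> D" "q \<in> D" and px: "p < x" "x < q"
    and pmax: "\<forall>y\<in>D. y < x \<longrightarrow> y \<le> p" and qmin: "\<forall>y\<in>D. x < y \<longrightarrow> q \<le> y"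
    and below: "lce D f x < f x"
  shows "(lce D f x - lce D f p) / (real x - real p) = (lce D f q - lce D f x) / (real q - real x)"
proof -
  define L where "L = lce D f"
  define c where "c = ((real q - real x) * L p + (real x - real p) * L q) / (real q - real p)"
  have "L x \<le> c"
    unfolding c_def L_def using convex_onD_lce[OF Om] D px unfolding convex_onD_def by blast
  moreover have "\<not> L x < c"
  proof
    assume "L x < c"
    define e where "e = min (f x - L x) (c - L x)"
    have e: "e > 0" using \<open>L x < c\<close> below unfolding e_def L_def by simp
    have "L x + e \<le> c" unfolding e_def by simp
    then have "convex_onD D (L(x := L x + e))"
      unfolding L_def c_def using e
      by (intro convex_onD_raise_point[OF convex_onD_lce[OF Om] D px pmax qmin]) auto
    moreover have "\<forall>y\<in>D. (L(x := L x + e)) y \<le> f y"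
      using lce_le[OF Om] unfolding e_def L_def by auto
    ultimately have "L x + e \<le> L x"
      using Omega_le_lce[of "L(x := L x + e)" D f x] D unfolding Omega_def L_def by auto
    with e show False by simp
  qed
  ultimately have "L x = c" by simp
  then show ?thesis using px unfolding c_def L_def by (simp add: field_simps)
qed

lemma chord_tendsto_sublinear:
  fixes a b :: nat
  assumes g: "((\<lambda>n. g n / real n) \<longlongrightarrow> 0) F" and F: "F \<le> sequentially"
  shows "((\<lambda>n. ((real n - real b) * A + (real b - real a) * g n) / (real n - real a)) \<longlongrightarrow> A) F"
proof -
  have t1: "((\<lambda>n. (real n - real b) / (real n - real a)) \<longlongrightarrow> 1) sequentially" by real_asymp
  have t2: "((\<lambda>n. real n / (real n - real a)) \<longlongrightarrow> 1) sequentially" by real_asymp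
  have "((\<lambda>n. A * ((real n - real b) / (real n - real a))
           + (real b - real a) * (g n / real n) * (real n / (real n - real a)))
        \<longlongrightarrow> A * 1 + (real b - real a) * 0 * 1) F"
    by (intro tendsto_intros tendsto_mono[OF F t1] tendsto_mono[OF F t2] g)
  moreover have "eventually (\<lambda>n. A * ((real n - real b) / (real n - real a))
           + (real b - real a) * (g n / real n) * (real n / (real n - real a))
         = ((real n - real b) * A + (real b - real a) * g n) / (real n - real a)) F"
  proof (rule filter_leD[OF F], unfold eventually_sequentially, intro exI allI impI)
    fix n assume "Suc a \<le> n"
    then have "real n - real a \<noteq> 0" "real n \<noteq> 0" by auto
    then show "A * ((real n - real b) / (real n - real a))
           + (real b - real a) * (g n / real n) * (real n / (real n - real a))
         = ((real n - real b) * A + (real b - real a) * g n) / (real n - real a)"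
      by (simp add: divide_simps del: of_nat_eq_iff)
  qed
  ultimately show ?thesis using tendsto_cong by fastforce
qed

text \<open>An increase \<open>L m < L m'\<close> would force \<open>L n\<close>, hence \<open>f n\<close>, to grow at least linearly
  along \<open>D\<close>, contradicting \<open>f n \<le> g\<^sub>2 n = o(n)\<close> infinitely often.\<close>
lemma convex_minorant_antimono:
  fixes L f g2 :: "nat \<Rightarrow> real" and D :: "nat set"
  assumes cv: "convex_onD D L" and Lf: "\<forall>x\<in>D. L x \<le> f x"
    and g2_lim: "((\<lambda>n. g2 n / real n) \<longlongrightarrow> 0) (inf sequentially (principal D))"
    and inf_often: "infinite {n\<in>D. f n \<le> g2 n}"
    and D: "m \<in> D" "m' \<in> D" and mm: "m < m'"
  shows "L m' \<le> L m"
proof (rule ccontr)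
  assume "\<not> L m' \<le> L m"
  define \<phi> where "\<phi> n = ((real n - real m') * L m + (real m' - real m) * g2 n) / (real n - real m)" for n
  have "(\<phi> \<longlongrightarrow> L m) (inf sequentially (principal D))"
    unfolding \<phi>_def using g2_lim by (intro chord_tendsto_sublinear) auto
  then have "eventually (\<lambda>n. \<phi> n < L m') (inf sequentially (principal D))"
    using \<open>\<not> L m' \<le> L m\<close> order_tendstoD(2) by fastforce
  then obtain N where N: "\<forall>n\<ge>N. n \<in> D \<longrightarrow> \<phi> n < L m'"
    unfolding eventually_inf_principal eventually_sequentially by blast
  obtain n where n: "n \<in> D" "f n \<le> g2 n" "max N (Suc m') \<le> n"
    using inf_often unfolding infinite_nat_iff_unbounded_le by blast
  have "L m' \<le> ((real n - real m') * L m + (real m' - real m) * L n) / (real n - real m)"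
    using cv D n mm unfolding convex_onD_def by auto
  also have "\<dots> \<le> \<phi> n"
    unfolding \<phi>_def using n Lf mm by (intro chord_mono) auto
  also have "\<dots> < L m'" using N n by auto
  finally show False by simp
qed

lemma attains_min_onD:
  fixes f g :: "nat \<Rightarrow> real"
  assumes d: "d \<in> D" and g: "filterlim g at_top (inf sequentially (principal D))"
    and fg: "\<forall>n\<in>D. n0 \<le> n \<longrightarrow> g n \<le> f n"
  obtains ms where "ms \<in> D" "\<forall>y\<in>D. f ms \<le> f y"
proof -
  have "eventually (\<lambda>n. f d < g n) (inf sequentially (principal D))"
    using g filterlim_at_top_dense by blast
  then obtain N where N: "\<forall>n\<ge>N. n \<in> D \<longrightarrow> f d < g n"
    unfolding eventually_inf_principal eventually_sequentially by blast
  define S where "S = insert d {n\<in>D. n < max N n0}"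
  define ms where "ms = arg_min_on f S"
  have S: "finite S" "S \<noteq> {}" "S \<subseteq> D" unfolding S_def using d by auto
  have min: "f ms \<le> f y" if "y \<in> S" for y
    unfolding ms_def using arg_min_least[OF S(1,2) that] .
  show thesis
  proof
    show "ms \<in> D" unfolding ms_def using arg_min_if_finite(1)[OF S(1,2)] S(3) by blast
    show "\<forall>y\<in>D. f ms \<le> f y"
    proof
      fix y assume "y \<in> D"
      show "f ms \<le> f y"
      proof (cases "y < max N n0")
        case True
        then show ?thesis using \<open>y \<in> D\<close> min unfolding S_def by auto
      next
        case False
        then have "f d < g y" "g y \<le> f y" using N fg \<open>y \<in> D\<close> by auto
        then show ?thesis using min[of d] unfolding S_def by fastforce
      qed
    qed
  qed
qed

lemma const_in_Omega:
  assumes "\<forall>y\<in>D. c \<le> f y"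
  shows "(\<lambda>_. c) \<in> Omega D f"
  using assms unfolding Omega_def convex_onD_def by (auto simp: field_simps)

lemma lce_eq_min_beyond_argmin:
  assumes ms: "ms \<in> D" "\<forall>y\<in>D. f ms \<le> f y"
    and anti: "\<forall>m\<in>D. \<forall>m'\<in>D. m < m' \<longrightarrow> lce D f m' \<le> lce D f m"
    and x: "x \<in> D" "ms \<le> x"
  shows "lce D f x = f ms"
proof (rule antisym)
  have Om: "Omega D f \<noteq> {}" using const_in_Omega[OF ms(2)] by blast
  have "lce D f x \<le> lce D f ms" using anti ms(1) x by (cases "ms = x") auto
  also have "\<dots> \<le> f ms" using lce_le[OF Om ms(1)] .
  finally show "lce D f x \<le> f ms" .
  show "f ms \<le> lce D f x" using Omega_le_lce[OF const_in_Omega[OF ms(2)] x(1)] .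
qed

lemma succD_in: "infinite D \<Longrightarrow> succD D x \<in> D"
  and less_succD: "infinite D \<Longrightarrow> x < succD D x"
  unfolding succD_def using LeastI_ex[of "\<lambda>y. y \<in> D \<and> x < y"] infinite_nat_iff_unbounded
  by blast+

lemma succD_le: "y \<in> D \<Longrightarrow> x < y \<Longrightarrow> succD D x \<le> y"
  unfolding succD_def by (simp add: Least_le)

lemma
  assumes "y0 \<in> D" "y0 < x"
  shows predD_in: "predD D x \<in> D" and predD_less: "predD D x < x"
proof -
  have "predD D x \<in> {y\<in>D. y < x}" unfolding predD_def by (rule Max_in) (use assms in auto)
  then show "predD D x \<in> D" "predD D x < x" by auto
qed

lemma le_predD: "y \<in> D \<Longrightarrow> y < x \<Longrightarrow> y \<le> predD D x"
  unfolding predD_def by (rule Max_ge) auto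

lemma succD_predD:
  assumes "x \<in> D" "y0 \<in> D" "y0 < x"
  shows "succD D (predD D x) = x"
  unfolding succD_def
proof (rule Least_equality)
  show "x \<in> D \<and> predD D x < x" using assms predD_less by blast
  show "x \<le> y" if "y \<in> D \<and> predD D x < y" for y
    using that le_predD[of y D x] by force
qed

definition fwd_slope :: "nat set \<Rightarrow> (nat \<Rightarrow> real) \<Rightarrow> nat \<Rightarrow> real" where
  "fwd_slope D g x = (g (succD D x) - g x) / (real (succD D x) - real x)"

lemma fwd_slope_const_tail:
  assumes "infinite D" "\<forall>y\<in>D. ms \<le> y \<longrightarrow> g y = c" "x \<in> D" "ms \<le> x"
  shows "fwd_slope D g x = 0"
  using assms succD_in[OF assms(1), of x] less_succD[OF assms(1), of x]
  unfolding fwd_slope_def by simp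

lemma Least_in_vertices: "d \<in> D \<Longrightarrow> (LEAST y. y \<in> D) \<in> vertices D f"
  unfolding vertices_def using LeastI[of "\<lambda>y. y \<in> D"] by auto

lemma vertices_subset: "vertices D f \<subseteq> D"
  unfolding vertices_def by auto

lemma Max_vertices_in:
  assumes "infinite D" "finite (vertices D f)"
  shows "Max (vertices D f) \<in> vertices D f"
proof (rule Max_in[OF assms(2)])
  obtain d where "d \<in> D" using infinite_imp_nonempty[OF assms(1)] by blast
  then show "vertices D f \<noteq> {}" using Least_in_vertices by blast
qed

lemma vertices_le_of_lce_const_tail:
  assumes Dinf: "infinite D" and ms: "ms \<in> D" and tail: "\<forall>y\<in>D. ms \<le> y \<longrightarrow> lce D f y = c"
  shows "vertices D f \<subseteq> {..ms}"
proof
  fix x assume x: "x \<in> vertices D f"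
  show "x \<in> {..ms}"
  proof (rule ccontr)
    assume "x \<notin> {..ms}"
    then have "ms < x" by simp
    have xD: "x \<in> D" using x vertices_subset by blast
    have "x \<noteq> (LEAST y. y \<in> D)" using Least_le[of "\<lambda>y. y \<in> D", OF ms] \<open>ms < x\<close> by auto
    then have "changes_slope D (lce D f) x" using x unfolding vertices_def by auto
    moreover have "lce D f (predD D x) = c" "lce D f x = c" "lce D f (succD D x) = c"
      using tail ms xD \<open>ms < x\<close> le_predD[OF ms \<open>ms < x\<close>] predD_in[OF ms \<open>ms < x\<close>]
        succD_in[OF Dinf] less_succD[OF Dinf, of x] by auto
    ultimately show False unfolding changes_slope_def by simp
  qed
qed

lemma fwd_slope_predD_off_vertices:
  assumes Dinf: "infinite D" and Om: "Omega D f \<noteq> {}"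
    and x: "x \<in> D" "x \<notin> vertices D f" and y0: "y0 \<in> D" "y0 < x"
  shows "fwd_slope D (lce D f) (predD D x) = fwd_slope D (lce D f) x"
proof -
  have "(lce D f x - lce D f (predD D x)) / (real x - real (predD D x))
      = (lce D f (succD D x) - lce D f x) / (real (succD D x) - real x)"
  proof (cases "lce D f x = f x")
    case True
    then have "\<not> changes_slope D (lce D f) x" using x unfolding vertices_def by auto
    then show ?thesis using x y0 succD_in[OF Dinf] less_succD[OF Dinf, of x]
      unfolding changes_slope_def by blast
  next
    case False
    then have "lce D f x < f x" using lce_le[OF Om x(1)] by simp
    then show ?thesis
      using y0 x predD_in predD_less le_predD succD_in[OF Dinf] less_succD[OF Dinf] succD_le
      by (intro lce_slopes_eq_off_contact[OF Om]) auto
  qed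
  then show ?thesis unfolding fwd_slope_def succD_predD[OF x(1) y0] .
qed

lemma fwd_slope_const_beyond_vertices:
  assumes Dinf: "infinite D" and Om: "Omega D f \<noteq> {}" and finV: "finite (vertices D f)"
  shows "x \<in> D \<Longrightarrow> Max (vertices D f) \<le> x
    \<Longrightarrow> fwd_slope D (lce D f) x = fwd_slope D (lce D f) (Max (vertices D f))"
proof (induction x rule: less_induct)
  case (less x)
  define mV where "mV = Max (vertices D f)"
  have mV: "mV \<in> D" "mV \<in> vertices D f"
    using Max_vertices_in[OF Dinf finV] vertices_subset unfolding mV_def by auto
  show ?case
  proof (cases "x = mV")
    case False
    then have "mV < x" using less.prems mV_def by simp
    then have "x \<notin> vertices D f" using Max_ge[OF finV] mV_def by fastforce
    have "mV \<le> predD D x" using le_predD mV \<open>mV < x\<close> by blast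
    then have "fwd_slope D (lce D f) (predD D x) = fwd_slope D (lce D f) mV"
      using less.IH predD_in predD_less mV \<open>mV < x\<close> mV_def by blast
    then show ?thesis
      using fwd_slope_predD_off_vertices[OF Dinf Om less.prems(1) \<open>x \<notin> vertices D f\<close> mV(1) \<open>mV < x\<close>]
      unfolding mV_def by simp
  qed (simp add: mV_def)
qed

lemma fwd_slope_Max_vertices_eq_0:
  assumes Dinf: "infinite D" and Om: "Omega D f \<noteq> {}" and finV: "finite (vertices D f)"
    and ms: "ms \<in> D" and tail: "\<forall>y\<in>D. ms \<le> y \<longrightarrow> lce D f y = c"
  shows "fwd_slope D (lce D f) (Max (vertices D f)) = 0"
proof -
  define x where "x = max (Max (vertices D f)) ms"
  have x: "x \<in> D" "Max (vertices D f) \<le> x" "ms \<le> x"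
    using Max_vertices_in[OF Dinf finV] vertices_subset ms unfolding x_def max_def by auto
  have "fwd_slope D (lce D f) (Max (vertices D f)) = fwd_slope D (lce D f) x"
    using fwd_slope_const_beyond_vertices[OF Dinf Om finV x(1,2)] by simp
  also have "\<dots> = 0" using fwd_slope_const_tail[OF Dinf tail x(1,3)] .
  finally show ?thesis .
qed

lemma fwd_slope_Max_vertices_in_slopes:
  assumes "infinite D" "finite (vertices D f)"
  shows "fwd_slope D (lce D f) (Max (vertices D f)) \<in> slopes D f"
  unfolding slopes_def fwd_slope_def by (rule UnI2) (use assms in blast)

lemma slopes_cases:
  assumes "s \<in> slopes D f"
  obtains (consecutive) m m' where "m \<in> vertices D f" "m' \<in> vertices D f" "m < m'"
      "s = (lce D f m' - lce D f m) / (real m' - real m)"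
    | (last) "infinite D" "finite (vertices D f)" "s = fwd_slope D (lce D f) (Max (vertices D f))"
  using assms unfolding slopes_def fwd_slope_def by blast

lemma slopes_subset:
  "slopes D f \<subseteq> (\<lambda>(m, m'). (lce D f m' - lce D f m) / (real m' - real m)) ` (vertices D f \<times> vertices D f)
     \<union> {fwd_slope D (lce D f) (Max (vertices D f))}"
proof
  fix s assume "s \<in> slopes D f"
  then show "s \<in> (\<lambda>(m, m'). (lce D f m' - lce D f m) / (real m' - real m)) ` (vertices D f \<times> vertices D f)
     \<union> {fwd_slope D (lce D f) (Max (vertices D f))}"
    by (cases rule: slopes_cases) auto
qed

lemma slopes_nonpos:
  assumes anti: "\<forall>m\<in>D. \<forall>m'\<in>D. m < m' \<longrightarrow> lce D f m' \<le> lce D f m" and s: "s \<in> slopes D f"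
  shows "s \<le> 0"
  using s
proof (cases rule: slopes_cases)
  case (consecutive m m')
  then have "m \<in> D" "m' \<in> D" using vertices_subset by blast+
  then have "lce D f m' \<le> lce D f m" using anti \<open>m < m'\<close> by blast
  then show ?thesis using consecutive by (simp add: divide_nonpos_pos)
next
  case last
  define m where "m = Max (vertices D f)"
  have "m \<in> D" using Max_vertices_in[OF last(1,2)] vertices_subset unfolding m_def by blast
  then have "lce D f (succD D m) \<le> lce D f m"
    using anti succD_in[OF last(1)] less_succD[OF last(1)] by blast
  then show ?thesis
    using last(3) less_succD[OF last(1), of m] unfolding fwd_slope_def m_def[symmetric]
    by (simp add: divide_nonpos_pos)
qed

lemma finite_enumerate_strict_mono:
  fixes S :: "'a::linorder set"
  assumes "finite S" "S \<noteq> {}"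
  obtains k :: nat and a :: "nat \<Rightarrow> 'a"
  where "k \<ge> 1" "strict_mono_on {1..k} a" "S = a ` {1..k}" "a k = Max S"
proof -
  define xs where "xs = sorted_list_of_set S"
  define k where "k = length xs"
  define a where "a = (\<lambda>i. xs ! (i - 1))"
  have set_xs: "set xs = S" and sorted: "sorted_wrt (<) xs"
    using assms(1) strict_sorted_list_of_set unfolding xs_def by auto
  have k: "k \<ge> 1" using set_xs assms(2) unfolding k_def by (cases xs) auto
  have mono: "strict_mono_on {1..k} a"
    unfolding strict_mono_on_def a_def k_def
    using sorted_wrt_nth_less[OF sorted] by (auto simp: diff_less_mono)
  have im: "S = a ` {1..k}"
  proof
    show "S \<subseteq> a ` {1..k}"
    proof
      fix s assume "s \<in> S"
      then obtain i where "i < k" "xs ! i = s" using set_xs unfolding k_def by (metis in_set_conv_nth)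
      then show "s \<in> a ` {1..k}" unfolding a_def by (intro image_eqI[of _ _ "Suc i"]) auto
    qed
    show "a ` {1..k} \<subseteq> S" unfolding a_def k_def using set_xs by auto
  qed
  have "Max S = a k"
  proof (rule Max_eqI[OF assms(1)])
    show "a k \<in> S" using im k by auto
    fix s assume "s \<in> S"
    then obtain i where "i \<in> {1..k}" "s = a i" using im by auto
    moreover have "i = k \<or> a i < a k"
      using strict_mono_onD[OF mono \<open>i \<in> {1..k}\<close>, of k] \<open>i \<in> {1..k}\<close> by force
    ultimately show "s \<le> a k" by auto
  qed
  then show thesis using that[OF k mono im] by simp
qed

theorem lemma4:
  fixes D :: "nat set" and f g1 g2 :: "nat \<Rightarrow> real"
  assumes g12: "\<forall>n\<in>D. g2 n \<ge> g1 n"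
    and g1_lim: "filterlim g1 at_top (inf sequentially (principal D))"
    and g2_lim: "((\<lambda>n. g2 n / real n) \<longlongrightarrow> 0) (inf sequentially (principal D))"
    and n0: "\<exists>n0\<in>D. \<forall>n\<in>D. n \<ge> n0 \<longrightarrow> f n \<ge> g1 n"
    and inf_often: "infinite {n\<in>D. f n \<le> g2 n}"
  shows "Omega D f \<noteq> {} \<and>
         (\<exists>k::nat. \<exists>a::nat \<Rightarrow> real. k \<ge> 1 \<and> strict_mono_on {1..k} a \<and>
            slopes D f = a ` {1..k} \<and> a k = 0)"
proof -
  have Dinf: "infinite D" using inf_often by (rule infinite_super[rotated]) auto
  obtain d where d: "d \<in> D" using infinite_imp_nonempty[OF Dinf] by blast
  obtain n1 where n1: "\<forall>n\<in>D. n1 \<le> n \<longrightarrow> g1 n \<le> f n" using n0 by blast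
  obtain ms where ms: "ms \<in> D" "\<forall>y\<in>D. f ms \<le> f y" by (rule attains_min_onD[OF d g1_lim n1])
  have Om: "Omega D f \<noteq> {}" using const_in_Omega[OF ms(2)] by blast
  have anti: "\<forall>m\<in>D. \<forall>m'\<in>D. m < m' \<longrightarrow> lce D f m' \<le> lce D f m"
    using convex_minorant_antimono[OF convex_onD_lce[OF Om] ballI[OF lce_le[OF Om]] g2_lim inf_often]
    by blast
  have tail: "\<forall>x\<in>D. ms \<le> x \<longrightarrow> lce D f x = f ms"
    using lce_eq_min_beyond_argmin[OF ms anti] by blast
  have finV: "finite (vertices D f)"
    by (rule finite_subset[OF vertices_le_of_lce_const_tail[OF Dinf ms(1) tail]]) simp
  have "0 \<in> slopes D f"
    using fwd_slope_Max_vertices_in_slopes[OF Dinf finV]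
      fwd_slope_Max_vertices_eq_0[OF Dinf Om finV ms(1) tail] by simp
  have fin: "finite (slopes D f)" by (rule finite_subset[OF slopes_subset]) (use finV in simp)
  obtain k :: nat and a :: "nat \<Rightarrow> real"
    where enum: "k \<ge> 1" "strict_mono_on {1..k} a" "slopes D f = a ` {1..k}" "a k = Max (slopes D f)"
    using finite_enumerate_strict_mono[OF fin] \<open>0 \<in> slopes D f\<close> by blast
  have "Max (slopes D f) = 0"
    by (rule Max_eqI[OF fin]) (use \<open>0 \<in> slopes D f\<close> slopes_nonpos[OF anti] in auto)
  then have "a k = 0" using enum(4) by simp
  then show ?thesis using Om enum(1-3) by blast
qed

end
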